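(* Every $N$-affine equivariant additive integrator map $\phi$ is affine functionally equivariant: for all Banach spaces $Y,Z$, every affine map $F\colon Y\to Z$, and all $f^{[1]},\ldots,f^{[N]}\in\mathfrak X(Y)$, with $g^{[\nu]}(y,z)=\bigl(f^{[\nu]}(y),F'(y)f^{[\nu]}(y)\bigr)$, one has $\phi(f^{[1]},\ldots,f^{[N]})\sim_{(\mathrm{id},F)}\phi(g^{[1]},\ldots,g^{[N]})$.
   Context: All spaces are real Banach spaces; $\mathfrak X(Y)$ denotes smooth vector fields on $Y$. For fixed $N\in\mathbb N$, an additive integrator map $\phi$ is a collection of smooth maps $\phi_Y\colon\mathfrak X(Y)^N\to\mathfrak X(Y)$, one per Banach space $Y$. For Gâteaux differentiable $\chi\colon Y\to U$, $f\sim_\chi g$ means $\chi'(y)f(y)=g(\chi(y))$ for all $y$; $(\mathrm{id},F)(y)=(y,F(y))$. $\phi$ is $N$-affine equivariant if for every affine map $A$ between Banach spaces, $f^{[\nu]}\sim_A g^{[\nu]}$ for all $\nu$ implies $\phi(f^{[1]},\ldots,f^{[N]})\sim_A\phi(g^{[1]},\ldots,g^{[N]})$. *)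

theory Defs
  imports "HOL-Analysis.Analysis"
begin

text \<open>Smoothness in the Bastiani (= Michal-Bastiani / convenient) sense: all iterated
  directional derivatives exist everywhere and are jointly continuous in the base point and
  the directions. For maps between Banach spaces this C-infinity notion coincides with
  Frechet C-infinity. D k x v is the k-th directional derivative at x in the directions
  v 0, ..., v (k-1); the continuity clause forces it to depend only on those directions.\<close>
definition smooth_map :: "('a::real_normed_vector \<Rightarrow> 'b::real_normed_vector) \<Rightarrow> bool" where
  "smooth_map f \<longleftrightarrow> (\<exists>D :: nat \<Rightarrow> 'a \<Rightarrow> (nat \<Rightarrow> 'a) \<Rightarrow> 'b.
     (\<forall>x v. D 0 x v = f x) \<and>
     (\<forall>k x v. ((\<lambda>t. D k (x + t *\<^sub>R v k) v) has_vector_derivative D (Suc k) x v) (at 0)) \<and>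
     (\<forall>k x v xs vs. xs \<longlonglongrightarrow> x \<and> (\<forall>i<k. (\<lambda>n. vs n i) \<longlonglongrightarrow> v i)
        \<longrightarrow> (\<lambda>n. D k (xs n) (vs n)) \<longlonglongrightarrow> D k x v))"

definition related_by ::
  "('a::real_normed_vector \<Rightarrow> 'b::real_normed_vector) \<Rightarrow> ('a \<Rightarrow> 'a) \<Rightarrow> ('b \<Rightarrow> 'b) \<Rightarrow> bool" where
  "related_by chi f g \<longleftrightarrow>
     (\<forall>y. ((\<lambda>t. chi (y + t *\<^sub>R f y)) has_vector_derivative g (chi y)) (at 0))"

definition affine_map :: "('a::real_normed_vector \<Rightarrow> 'b::real_normed_vector) \<Rightarrow> bool" where
  "affine_map A \<longleftrightarrow> (\<exists>L c. bounded_linear L \<and> A = (\<lambda>x. L x + c))"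

text \<open>The component phi_Y of an additive integrator map on the space Y (= the type 'a):
  it maps N-tuples (lists of length N) of smooth vector fields to smooth vector fields.\<close>
definition integrator_component :: "nat \<Rightarrow> (('a::banach \<Rightarrow> 'a) list \<Rightarrow> ('a \<Rightarrow> 'a)) \<Rightarrow> bool" where
  "integrator_component N phi \<longleftrightarrow>
     (\<forall>fs. length fs = N \<and> (\<forall>f\<in>set fs. smooth_map f) \<longrightarrow> smooth_map (phi fs))"

definition affine_equivariant_between ::
  "nat \<Rightarrow> (('a::banach \<Rightarrow> 'a) list \<Rightarrow> ('a \<Rightarrow> 'a)) \<Rightarrow> (('b::banach \<Rightarrow> 'b) list \<Rightarrow> ('b \<Rightarrow> 'b)) \<Rightarrow> bool" where
  "affine_equivariant_between N phi1 phi2 \<longleftrightarrow>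
     (\<forall>A fs gs. affine_map A \<and> length fs = N \<and> length gs = N \<and>
        (\<forall>f\<in>set fs. smooth_map f) \<and> (\<forall>g\<in>set gs. smooth_map g) \<and>
        list_all2 (related_by A) fs gs
        \<longrightarrow> related_by A (phi1 fs) (phi2 gs))"

end

theory Submission
  imports Defs
begin

text \<open>The lifted field g(y, z) = (f y, L (f y)) is f composed with the projection onto Y,
  followed by the linear map y \<mapsto> (y, L y); both operations preserve smoothness. For an
  affine map, relatedness is a pointwise identity, and the graph y \<mapsto> (y, F y) is affine and
  relates each f to its lift. So equivariance of \<phi> from Y to Y \<times> Z under this one affine
  map gives the claim.\<close>

lemma smooth_map_bounded_linear_comp:
  fixes f :: "'a::real_normed_vector \<Rightarrow> 'b::real_normed_vector" and M :: "'b \<Rightarrow> 'c::real_normed_vector"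
  assumes "smooth_map f" and M: "bounded_linear M"
  shows "smooth_map (\<lambda>x. M (f x))"
proof -
  obtain D :: "nat \<Rightarrow> 'a \<Rightarrow> (nat \<Rightarrow> 'a) \<Rightarrow> 'b" where
    D0: "\<forall>x v. D 0 x v = f x" and
    DS: "\<forall>k x v. ((\<lambda>t. D k (x + t *\<^sub>R v k) v) has_vector_derivative D (Suc k) x v) (at 0)" and
    DC: "\<forall>k x v xs vs. xs \<longlonglongrightarrow> x \<and> (\<forall>i<k. (\<lambda>n. vs n i) \<longlonglongrightarrow> v i)
        \<longrightarrow> (\<lambda>n. D k (xs n) (vs n)) \<longlonglongrightarrow> D k x v"
    using assms(1) unfolding smooth_map_def by blast
  show ?thesis
    unfolding smooth_map_def
  proof (intro exI[of _ "\<lambda>k x v. M (D k x v)"] conjI allI impI)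
    show "M (D 0 x v) = M (f x)" for x v
      using D0 by simp
    show "((\<lambda>t. M (D k (x + t *\<^sub>R v k) v)) has_vector_derivative M (D (Suc k) x v)) (at 0)"
      for k x v
      using DS by (intro bounded_linear.has_vector_derivative[OF M]) blast
    show "(\<lambda>n. M (D k (xs n) (vs n))) \<longlonglongrightarrow> M (D k x v)"
      if "xs \<longlonglongrightarrow> x \<and> (\<forall>i<k. (\<lambda>n. vs n i) \<longlonglongrightarrow> v i)" for k x v xs vs
      using DC that by (intro bounded_linear.tendsto[OF M]) blast
  qed
qed

lemma smooth_map_comp_bounded_linear:
  fixes f :: "'b::real_normed_vector \<Rightarrow> 'c::real_normed_vector" and P :: "'a::real_normed_vector \<Rightarrow> 'b"
  assumes "smooth_map f" and P: "bounded_linear P"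
  shows "smooth_map (\<lambda>x. f (P x))"
proof -
  obtain D :: "nat \<Rightarrow> 'b \<Rightarrow> (nat \<Rightarrow> 'b) \<Rightarrow> 'c" where
    D0: "\<forall>x v. D 0 x v = f x" and
    DS: "\<forall>k x v. ((\<lambda>t. D k (x + t *\<^sub>R v k) v) has_vector_derivative D (Suc k) x v) (at 0)" and
    DC: "\<forall>k x v xs vs. xs \<longlonglongrightarrow> x \<and> (\<forall>i<k. (\<lambda>n. vs n i) \<longlonglongrightarrow> v i)
        \<longrightarrow> (\<lambda>n. D k (xs n) (vs n)) \<longlonglongrightarrow> D k x v"
    using assms(1) unfolding smooth_map_def by blast
  interpret P: bounded_linear P by (fact P)
  show ?thesis
    unfolding smooth_map_def
  proof (intro exI[of _ "\<lambda>k x v. D k (P x) (P \<circ> v)"] conjI allI impI)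
    show "D 0 (P x) (P \<circ> v) = f (P x)" for x v
      using D0 by simp
    show "((\<lambda>t. D k (P (x + t *\<^sub>R v k)) (P \<circ> v)) has_vector_derivative
        D (Suc k) (P x) (P \<circ> v)) (at 0)" for k x v
      using DS[rule_format, of k "P x" "P \<circ> v"] by (simp add: P.add P.scaleR)
    show "(\<lambda>n. D k (P (xs n)) (P \<circ> vs n)) \<longlonglongrightarrow> D k (P x) (P \<circ> v)"
      if "xs \<longlonglongrightarrow> x \<and> (\<forall>i<k. (\<lambda>n. vs n i) \<longlonglongrightarrow> v i)" for k x v xs vs
      using DC[rule_format, of "\<lambda>n. P (xs n)" "P x" k "\<lambda>n. P \<circ> vs n" "P \<circ> v"] that
      by (simp add: P.tendsto)
  qed
qed

lemma smooth_map_graph_lift: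
  fixes f :: "'a::real_normed_vector \<Rightarrow> 'a" and L :: "'a \<Rightarrow> 'b::real_normed_vector"
  assumes "smooth_map f" and L: "bounded_linear L"
  shows "smooth_map (\<lambda>(y, z::'b). (f y, L (f y)))"
proof -
  have "smooth_map (\<lambda>p::'a \<times> 'b. (f (fst p), L (f (fst p))))"
    using smooth_map_comp_bounded_linear[OF assms(1) bounded_linear_fst]
    by (rule smooth_map_bounded_linear_comp) (intro bounded_linear_Pair bounded_linear_ident L)
  then show ?thesis
    by (simp add: case_prod_beta')
qed

lemma related_by_affine_iff:
  fixes L :: "'a::real_normed_vector \<Rightarrow> 'b::real_normed_vector"
    and f :: "'a \<Rightarrow> 'a" and g :: "'b \<Rightarrow> 'b"
  assumes L: "bounded_linear L"
  shows "related_by (\<lambda>x. L x + c) f g \<longleftrightarrow> (\<forall>x. g (L x + c) = L (f x))"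
proof -
  have "((\<lambda>t. L (x + t *\<^sub>R f x) + c) has_vector_derivative L (f x)) (at 0)" for x
  proof -
    have "((\<lambda>t. x + t *\<^sub>R f x) has_vector_derivative f x) (at 0)"
      using has_vector_derivative_add[OF has_vector_derivative_const
          bounded_linear.has_vector_derivative[OF bounded_linear_scaleR_left has_vector_derivative_id]]
      by simp
    then show ?thesis
      by (intro has_vector_derivative_add_const[THEN iffD2] bounded_linear.has_vector_derivative[OF L])
  qed
  then show ?thesis
    unfolding related_by_def by (metis vector_derivative_unique_at)
qed

lemma affine_map_graph:
  fixes L :: "'a::real_normed_vector \<Rightarrow> 'b::real_normed_vector"
  assumes L: "bounded_linear L"
  shows "affine_map (\<lambda>y. (y, L y + c))"
  unfolding affine_map_def
  by (intro exI[of _ "\<lambda>y. (y, L y)"] exI[of _ "(0, c)"] conjI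
      bounded_linear_Pair bounded_linear_ident L) simp

lemma related_by_graph_lift:
  fixes L :: "'a::real_normed_vector \<Rightarrow> 'b::real_normed_vector" and f :: "'a \<Rightarrow> 'a"
  assumes L: "bounded_linear L"
  shows "related_by (\<lambda>y. (y, L y + c)) f (\<lambda>(y, z). (f y, L (f y)))"
proof -
  have "bounded_linear (\<lambda>y. (y, L y))"
    by (intro bounded_linear_Pair bounded_linear_ident L)
  from related_by_affine_iff[OF this, of "(0, c)"] show ?thesis
    by simp
qed

theorem proposition4p5:
  fixes N :: nat
    and phiY :: "('y::banach \<Rightarrow> 'y) list \<Rightarrow> ('y \<Rightarrow> 'y)"
    and phiYZ :: "('y \<times> 'z::banach \<Rightarrow> 'y \<times> 'z) list \<Rightarrow> ('y \<times> 'z \<Rightarrow> 'y \<times> 'z)"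
    and F :: "'y \<Rightarrow> 'z" and L :: "'y \<Rightarrow> 'z" and c :: 'z
    and fs :: "('y \<Rightarrow> 'y) list"
  assumes "integrator_component N phiY"
    and "integrator_component N phiYZ"
    and "affine_equivariant_between N phiY phiY"
    and "affine_equivariant_between N phiY phiYZ"
    and "affine_equivariant_between N phiYZ phiY"
    and "affine_equivariant_between N phiYZ phiYZ"
    and "bounded_linear L" and "F = (\<lambda>y. L y + c)"
    and "length fs = N" and "\<forall>f\<in>set fs. smooth_map f"
  shows "related_by (\<lambda>y. (y, F y)) (phiY fs)
           (phiYZ (map (\<lambda>f. \<lambda>(y, z). (f y, L (f y))) fs))"
proof -
  let ?gs = "map (\<lambda>f. \<lambda>(y, z::'z). (f y, L (f y))) fs"
  have "\<forall>g\<in>set ?gs. smooth_map g"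
    using assms(10) by (auto intro: smooth_map_graph_lift assms(7))
  moreover have "list_all2 (related_by (\<lambda>y. (y, F y))) fs ?gs"
    by (simp add: list_all2_conv_all_nth assms(8) related_by_graph_lift assms(7))
  ultimately show ?thesis
    using assms(4) affine_map_graph[OF assms(7)] assms(8-10)
    unfolding affine_equivariant_between_def by auto
qed

end
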